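(* Suppose $\sigma_n,\sigma\in D(\mathbb R^d,X)$. Then $d_S(\sigma_n,\sigma)\to0$ if and only if there exist $\lambda_n\in\Lambda$ such that $\gamma(\lambda_n)\to0$ and $r(\sigma_n(x),\sigma(\lambda_n(x)))\to0$ uniformly over $x$ in compact subsets of $\mathbb R^d$.
   Context: $(X,r)$ is a complete separable metric space with $r\le1$; $d\ge1$. Order on $\mathbb R^d$: $x\le y$ iff $x_i\le y_i$ for all $i$; $|x|_\infty=\max_i|x_i|$. $D=D(\mathbb R^d,X)$ is the set of functions $\sigma:\mathbb R^d\to X$ such that for every bounded rectangle $[a,b)$ and $\varepsilon>0$ there are finite partitions $a_i=s_i^0<\dots<s_i^{m_i}=b_i$ of each coordinate axis with $\sup\{r(\sigma(x),\sigma(y)): s_i^{k_i}\le x_i,y_i<s_i^{k_i+1}\ (1\le i\le d)\}\le\varepsilon$ for every multi-index $k$. For $u>0$, $[x]_u=((x_1\wedge u)\vee(-u),\dots,(x_d\wedge u)\vee(-u))$. $\Lambda$ is the set of maps $\lambda(x)=(\lambda_1(x_1),\dots,\lambda_d(x_d))$ with each $\lambda_i:\mathbb R\to\mathbb R$ a bijective strictly increasing Lipschitz function, such that $\gamma(\lambda)=\gamma_0(\lambda)+\gamma_1(\lambda)<\infty$, where $\gamma_0(\lambda)=\sum_{i=1}^d\sup_{s\ne t}\big|\log\frac{\lambda_i(t)-\lambda_i(s)}{t-s}\big|$ and $\gamma_1(\lambda)=\int_0^\infty e^{-u}\big(1\wedge\sup_{x\in\mathbb R^d}|[\lambda(x)]_u-[x]_u|_\infty\big)du$.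 For $\rho,\sigma\in D$, $\lambda\in\Lambda$, $u>0$: $d(\rho,\sigma,\lambda,u)=\sup_x r(\rho([x]_u),\sigma([\lambda(x)]_u))$, and $d_S(\rho,\sigma)=\inf_{\lambda\in\Lambda}\{\gamma(\lambda)\vee\int_0^\infty e^{-u}d(\rho,\sigma,\lambda,u)du\}$. *)

theory Defs
  imports "HOL-Analysis.Analysis"
begin

text \<open>Points of R^d are vectors real^'n ('n a finite index type, d = CARD('n) \<ge> 1).
  The metric space (X,r) is a type 'a of class polish_space (complete, separable metric)
  with metric dist; the bound r \<le> 1 is an explicit assumption of the theorem.\<close>

definition supnorm :: "real^'n::finite \<Rightarrow> real" where
  "supnorm x = Max (range (\<lambda>i. \<bar>x$i\<bar>))"

definition Dspace :: "(real^'n::finite \<Rightarrow> 'a::metric_space) set" where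
  "Dspace = {\<sigma>. \<forall>a b :: real^'n. \<forall>\<epsilon>>0. (\<forall>i. a$i < b$i) \<longrightarrow>
      (\<exists>(s :: 'n \<Rightarrow> nat \<Rightarrow> real) (m :: 'n \<Rightarrow> nat).
         (\<forall>i. s i 0 = a$i \<and> s i (m i) = b$i \<and> (\<forall>j < m i. s i j < s i (Suc j))) \<and>
         (\<forall>k :: 'n \<Rightarrow> nat. (\<forall>i. k i < m i) \<longrightarrow>
            (\<forall>x y. (\<forall>i. s i (k i) \<le> x$i \<and> x$i < s i (Suc (k i)) \<and>
                        s i (k i) \<le> y$i \<and> y$i < s i (Suc (k i)))
                   \<longrightarrow> dist (\<sigma> x) (\<sigma> y) \<le> \<epsilon>)))}"

definition trunc :: "real \<Rightarrow> real^'n \<Rightarrow> real^'n" where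
  "trunc u x = (\<chi> i. max (min (x$i) u) (- u))"

text \<open>A time change lambda is given by its coordinate maps lambda_i.\<close>
definition lam_app :: "('n \<Rightarrow> real \<Rightarrow> real) \<Rightarrow> real^'n \<Rightarrow> real^'n" where
  "lam_app l x = (\<chi> i. l i (x$i))"

definition gamma0 :: "('n::finite \<Rightarrow> real \<Rightarrow> real) \<Rightarrow> ereal" where
  "gamma0 l = (\<Sum>i\<in>UNIV. (SUP st\<in>{(s,t). s \<noteq> (t::real)}.
      ereal \<bar>ln ((l i (snd st) - l i (fst st)) / (snd st - fst st))\<bar>))"

definition gamma1 :: "('n::finite \<Rightarrow> real \<Rightarrow> real) \<Rightarrow> real" where
  "gamma1 l = (LINT u:{0<..}|lborel.
      exp (- u) * min 1 (SUP x\<in>UNIV. supnorm (trunc u (lam_app l x) - trunc u x)))"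

definition gamma :: "('n::finite \<Rightarrow> real \<Rightarrow> real) \<Rightarrow> ereal" where
  "gamma l = gamma0 l + ereal (gamma1 l)"

definition Lambda :: "('n::finite \<Rightarrow> real \<Rightarrow> real) set" where
  "Lambda = {l. (\<forall>i. bij (l i) \<and> strict_mono (l i) \<and> (\<exists>L. L-lipschitz_on UNIV (l i)))
               \<and> gamma l < \<infinity>}"

definition dlu :: "(real^'n::finite \<Rightarrow> 'a::metric_space) \<Rightarrow> (real^'n \<Rightarrow> 'a)
                    \<Rightarrow> ('n \<Rightarrow> real \<Rightarrow> real) \<Rightarrow> real \<Rightarrow> real" where
  "dlu \<rho> \<sigma> l u = (SUP x\<in>UNIV. dist (\<rho> (trunc u x)) (\<sigma> (trunc u (lam_app l x))))"

definition dS :: "(real^'n::finite \<Rightarrow> 'a::metric_space) \<Rightarrow> (real^'n \<Rightarrow> 'a) \<Rightarrow> ereal" where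
  "dS \<rho> \<sigma> = (INF l\<in>Lambda. max (gamma l)
      (ereal (LINT u:{0<..}|lborel. exp (- u) * dlu \<rho> \<sigma> l u)))"

end

theory Submission
  imports Defs
begin

text \<open>Since \<open>\<gamma>\<^sub>1(\<lambda>) \<ge> exp (-(V + 1)) \<cdot> min 1 (sup\<^sub>x |[\<lambda>(x)]\<^sub>V - [x]\<^sub>V|)\<close>, the condition
  \<open>\<gamma>(\<lambda>\<^sub>n) \<rightarrow> 0\<close> forces \<open>\<lambda>\<^sub>n \<rightarrow> id\<close> uniformly on bounded sets.  In the same way a small integral
  \<open>\<integral> exp (-u) \<cdot> d(\<sigma>\<^sub>n, \<sigma>, \<lambda>\<^sub>n, u) du\<close> yields a level \<open>u\<close> beyond a given compact set at which
  \<open>d(\<sigma>\<^sub>n, \<sigma>, \<lambda>\<^sub>n, u)\<close> is small, and truncation at \<open>u\<close> does not affect points of that set.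

  Conversely, take a level \<open>u\<close> that is none of the countably many grid points witnessing
  \<open>\<sigma> \<in> D\<close>.  Truncation at \<open>u\<close> then commutes with \<open>\<lambda>\<^sub>n\<close> up to staying inside one grid cell,
  where \<open>\<sigma>\<close> oscillates little, so \<open>d(\<sigma>\<^sub>n, \<sigma>, \<lambda>\<^sub>n, u) \<rightarrow> 0\<close> for almost every \<open>u\<close>, and dominated
  convergence finishes the proof.  Measurability of \<open>u \<mapsto> d(\<rho>, \<sigma>, \<lambda>, u)\<close> comes from right
  continuity, which reduces the supremum over \<open>x\<close> to a countable one.\<close>

section \<open>Truncation and the displacement of a time change\<close>

definition clip :: "real \<Rightarrow> real \<Rightarrow> real" where
  "clip u t = max (min t u) (- u)"

lemma trunc_nth [simp]: "trunc u x $ i = clip u (x $ i)"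
  by (simp add: trunc_def clip_def)

lemma lam_app_nth [simp]: "lam_app l x $ i = l i (x $ i)"
  by (simp add: lam_app_def)

lemma clip_abs_le: "\<bar>clip u t\<bar> \<le> \<bar>u\<bar>"
  by (auto simp: clip_def)

lemma clip_eq_self: "\<bar>t\<bar> \<le> u \<Longrightarrow> clip u t = t"
  by (auto simp: clip_def)

lemma clip_mono: "s \<le> t \<Longrightarrow> clip u s \<le> clip u t"
  by (auto simp: clip_def)

lemma clip_diff_mono: "u \<le> u' \<Longrightarrow> \<bar>clip u s - clip u t\<bar> \<le> \<bar>clip u' s - clip u' t\<bar>"
  by (auto simp: clip_def min_def max_def abs_if)

lemma tendsto_clip: "(f \<longlongrightarrow> t) F \<Longrightarrow> ((\<lambda>k. clip u (f k)) \<longlongrightarrow> clip u t) F"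
  unfolding clip_def by (intro tendsto_intros)

lemma trunc_eq_self: "(\<And>i. \<bar>x $ i\<bar> \<le> u) \<Longrightarrow> trunc u x = x"
  by (simp add: vec_eq_iff clip_eq_self)

lemma abs_nth_le_supnorm: "\<bar>x $ i\<bar> \<le> supnorm x"
  unfolding supnorm_def by (rule Max_ge) auto

lemma supnorm_leI: "(\<And>i. \<bar>x $ i\<bar> \<le> c) \<Longrightarrow> supnorm x \<le> c"
  unfolding supnorm_def by (subst Max_le_iff) auto

lemma supnorm_nonneg: "0 \<le> supnorm x"
  using abs_nth_le_supnorm[of x] abs_ge_zero order_trans by blast

definition displacement :: "('n::finite \<Rightarrow> real \<Rightarrow> real) \<Rightarrow> real \<Rightarrow> real" where
  "displacement l u = (SUP x. supnorm (trunc u (lam_app l x) - trunc u x))"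

lemma bdd_above_displacement: "bdd_above (range (\<lambda>x. supnorm (trunc u (lam_app l x) - trunc u x)))"
proof (rule bdd_aboveI)
  fix y assume "y \<in> range (\<lambda>x. supnorm (trunc u (lam_app l x) - trunc u x))"
  then obtain x where y: "y = supnorm (trunc u (lam_app l x) - trunc u x)" by blast
  show "y \<le> 2 * \<bar>u\<bar>"
    unfolding y using clip_abs_le[of u] by (intro supnorm_leI) (simp add: abs_diff_le_iff, smt (verit))
qed

lemma supnorm_le_displacement: "supnorm (trunc u (lam_app l x) - trunc u x) \<le> displacement l u"
  unfolding displacement_def by (rule cSUP_upper[OF _ bdd_above_displacement]) auto

lemma displacement_nonneg: "0 \<le> displacement l u"
  using supnorm_le_displacement supnorm_nonneg order_trans by blast

lemma mono_displacement: "mono (displacement l)"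
proof (rule monoI)
  fix u u' :: real assume "u \<le> u'"
  have "supnorm (trunc u (lam_app l x) - trunc u x) \<le> supnorm (trunc u' (lam_app l x) - trunc u' x)" for x
  proof (rule supnorm_leI)
    fix i
    have "\<bar>(trunc u (lam_app l x) - trunc u x) $ i\<bar> \<le> \<bar>(trunc u' (lam_app l x) - trunc u' x) $ i\<bar>"
      using clip_diff_mono[OF \<open>u \<le> u'\<close>] by simp
    also have "\<dots> \<le> supnorm (trunc u' (lam_app l x) - trunc u' x)"
      by (rule abs_nth_le_supnorm)
    finally show "\<bar>(trunc u (lam_app l x) - trunc u x) $ i\<bar> \<le> \<dots>" .
  qed
  then show "displacement l u \<le> displacement l u'"
    unfolding displacement_def by (intro cSUP_mono[OF _ bdd_above_displacement]) auto
qed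

lemma displacement_bounds_coordinates:
  fixes l :: "'n::finite \<Rightarrow> real \<Rightarrow> real"
  assumes "displacement l u < d" "\<bar>t\<bar> + d \<le> u"
  shows "\<bar>l i t - t\<bar> < d"
proof -
  define x :: "real^'n" where "x = (\<chi> j. t)"
  have "\<bar>(trunc u (lam_app l x) - trunc u x) $ i\<bar> \<le> displacement l u"
    using abs_nth_le_supnorm supnorm_le_displacement order_trans by blast
  then have "\<bar>clip u (l i t) - clip u t\<bar> \<le> displacement l u"
    by (simp add: x_def)
  moreover have "clip u t = t"
    using assms displacement_nonneg[of l u] by (intro clip_eq_self) auto
  ultimately show ?thesis
    using assms by (auto simp: clip_def min_def max_def split: if_splits)
qed

section \<open>Integrals against the weight \<open>exp (- u)\<close> on \<open>(0, \<infinity>)\<close>\<close>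

lemma integrable_exp_minus: "integrable lborel (\<lambda>u::real. indicator {0<..} u * exp (- u))"
proof -
  have "(\<lambda>x::real. exp (- x)) integrable_on {0..}"
    using integrable_on_exp_minus_to_infinity[of 1 0] by simp
  then have "(\<lambda>x::real. exp (- x)) absolutely_integrable_on {0..}"
    by (rule nonnegative_absolutely_integrable_1) auto
  then have "integrable lebesgue (\<lambda>x::real. indicat_real {0..} x *\<^sub>R exp (- x))"
    by (simp add: set_integrable_def)
  then have "integrable lborel (\<lambda>x::real. indicat_real {0..} x *\<^sub>R exp (- x))"
    by (subst (asm) integrable_completion)
      (auto intro!: borel_measurable_continuous_on_indicator continuous_intros)
  then show ?thesis
    by (rule Bochner_Integration.integrable_bound) (auto simp: indicator_def)
qed

lemma integrable_exp_weighted: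
  fixes h :: "real \<Rightarrow> real"
  assumes "h \<in> borel_measurable borel" "\<And>u. \<bar>h u\<bar> \<le> 1"
  shows "integrable lborel (\<lambda>u. indicator {0<..} u *\<^sub>R (exp (- u) * h u))"
proof (rule Bochner_Integration.integrable_bound[OF integrable_exp_minus])
  have "h \<in> borel_measurable lborel" using assms(1) by simp
  then show "(\<lambda>u. indicator {0<..} u *\<^sub>R (exp (- u) * h u)) \<in> borel_measurable lborel"
    by measurable
  show "AE u in lborel. norm (indicator {0<..} u *\<^sub>R (exp (- u) * h u)) \<le> norm (indicator {0<..} u * exp (- u))"
    using assms(2) by (auto simp: indicator_def abs_mult intro!: mult_left_le)
qed

lemma exp_weighted_integral_nonneg:
  fixes h :: "real \<Rightarrow> real"
  assumes "\<And>u. 0 \<le> h u"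
  shows "0 \<le> (LINT u:{0<..}|lborel. exp (- u) * h u)"
  unfolding set_lebesgue_integral_def
  using assms by (intro Bochner_Integration.integral_nonneg) (auto simp: indicator_def)

lemma exp_weighted_integral_lower_bound:
  fixes h :: "real \<Rightarrow> real"
  assumes "h \<in> borel_measurable borel" "\<And>u. 0 \<le> h u" "\<And>u. h u \<le> 1"
    and "0 < a" "0 \<le> c" "\<And>u. u \<in> {a..a+1} \<Longrightarrow> c \<le> h u"
  shows "exp (- (a+1)) * c \<le> (LINT u:{0<..}|lborel. exp (- u) * h u)"
proof -
  let ?c = "exp (- (a+1)) * c"
  have "?c = LINT u|lborel. indicator {a..a+1} u * ?c"
    by (simp add: integral_indicator measure_lborel_Icc)
  also have "\<dots> \<le> LINT u|lborel. indicator {0<..} u *\<^sub>R (exp (- u) * h u)"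
  proof (rule integral_mono)
    show "integrable lborel (\<lambda>u. indicator {0<..} u *\<^sub>R (exp (- u) * h u))"
      using assms(1-3) by (intro integrable_exp_weighted) (simp_all add: abs_le_iff)
    fix u :: real
    show "indicator {a..a+1} u * ?c \<le> indicator {0<..} u *\<^sub>R (exp (- u) * h u)"
    proof (cases "u \<in> {a..a+1}")
      case True
      then have "?c \<le> exp (- u) * h u"
        using assms(5,6) by (intro mult_mono) auto
      then show ?thesis using True \<open>0 < a\<close> by (auto simp: indicator_def)
    qed (use assms(2) in \<open>auto simp: indicator_def\<close>)
  qed simp
  also have "\<dots> = (LINT u:{0<..}|lborel. exp (- u) * h u)"
    by (simp add: set_lebesgue_integral_def)
  finally show ?thesis .
qed
section \<open>Time changes with small \<open>\<gamma>\<close>\<close>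

lemma gamma1_eq_displacement: "gamma1 l = (LINT u:{0<..}|lborel. exp (- u) * min 1 (displacement l u))"
  by (simp add: gamma1_def displacement_def)

lemma gamma1_nonneg: "0 \<le> gamma1 l"
  unfolding gamma1_eq_displacement
  by (intro exp_weighted_integral_nonneg) (simp add: displacement_nonneg)

lemma gamma0_nonneg: "0 \<le> gamma0 l"
  unfolding gamma0_def by (intro sum_nonneg SUP_upper2[of "(0, 1)"]) auto

lemma gamma_nonneg: "0 \<le> gamma l"
  unfolding gamma_def using gamma0_nonneg[of l] gamma1_nonneg[of l] by simp

lemma gamma1_le_gamma: "ereal (gamma1 l) \<le> gamma l"
  unfolding gamma_def using gamma0_nonneg[of l] add_increasing by blast

lemma tendsto_gamma1_zero:
  assumes "(\<lambda>n. gamma (ls n)) \<longlonglongrightarrow> 0"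
  shows "(\<lambda>n. gamma1 (ls n)) \<longlonglongrightarrow> 0"
proof -
  have "(\<lambda>n. ereal (gamma1 (ls n))) \<longlonglongrightarrow> 0"
    by (rule tendsto_sandwich[OF _ _ tendsto_const assms])
      (auto simp: gamma1_nonneg gamma1_le_gamma)
  then show ?thesis by (simp add: zero_ereal_def lim_ereal)
qed

lemma displacement_le_gamma1:
  assumes "0 < u"
  shows "exp (- (u+1)) * min 1 (displacement l u) \<le> gamma1 l"
  unfolding gamma1_eq_displacement
proof (rule exp_weighted_integral_lower_bound[OF _ _ _ assms])
  show "(\<lambda>v. min 1 (displacement l v)) \<in> borel_measurable borel"
    using borel_measurable_mono[OF mono_displacement] by measurable
  show "min 1 (displacement l u) \<le> min 1 (displacement l v)" if "v \<in> {u..u+1}" for v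
    using that by (intro min.mono order_refl monoD[OF mono_displacement]) auto
qed (auto simp: displacement_nonneg)

lemma eventually_close_to_id:
  assumes "(\<lambda>n. gamma (ls n)) \<longlonglongrightarrow> 0" "0 < V" "0 < d"
  shows "\<forall>\<^sub>F n in sequentially. \<forall>i t. \<bar>t\<bar> + d \<le> V \<longrightarrow> \<bar>ls n i t - t\<bar> < d"
proof -
  have "\<forall>\<^sub>F n in sequentially. gamma1 (ls n) < exp (- (V+1)) * min 1 d"
    using assms by (intro order_tendstoD(2)[OF tendsto_gamma1_zero]) auto
  then show ?thesis
  proof eventually_elim
    case (elim n)
    then have "exp (- (V+1)) * min 1 (displacement (ls n) V) < exp (- (V+1)) * min 1 d"
      using displacement_le_gamma1[OF \<open>0 < V\<close>, of "ls n"] by linarith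
    then have "displacement (ls n) V < d" by (simp add: min_def split: if_splits)
    then show ?case using displacement_bounds_coordinates by blast
  qed
qed

section \<open>Regularity of the elements of \<open>D\<close>\<close>

definition is_partition :: "real^'n::finite \<Rightarrow> real^'n \<Rightarrow> ('n \<Rightarrow> nat \<Rightarrow> real) \<Rightarrow> ('n \<Rightarrow> nat) \<Rightarrow> bool" where
  "is_partition a b s m \<longleftrightarrow> (\<forall>i. s i 0 = a$i \<and> s i (m i) = b$i \<and> (\<forall>j < m i. s i j < s i (Suc j)))"

definition same_cell :: "('n \<Rightarrow> nat \<Rightarrow> real) \<Rightarrow> ('n \<Rightarrow> nat) \<Rightarrow> 'n \<Rightarrow> real \<Rightarrow> real \<Rightarrow> bool" where
  "same_cell s m i x y \<longleftrightarrow> (\<exists>j < m i. s i j \<le> x \<and> x < s i (Suc j) \<and> s i j \<le> y \<and> y < s i (Suc j))"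

definition osc_on_cells_le :: "(real^'n::finite \<Rightarrow> 'a::metric_space) \<Rightarrow> ('n \<Rightarrow> nat \<Rightarrow> real) \<Rightarrow> ('n \<Rightarrow> nat) \<Rightarrow> real \<Rightarrow> bool" where
  "osc_on_cells_le \<sigma> s m \<epsilon> \<longleftrightarrow>
     (\<forall>x y. (\<forall>i. same_cell s m i (x$i) (y$i)) \<longrightarrow> dist (\<sigma> x) (\<sigma> y) \<le> \<epsilon>)"

lemma osc_on_cells_le_mono: "osc_on_cells_le \<sigma> s m \<epsilon> \<Longrightarrow> \<epsilon> \<le> \<epsilon>' \<Longrightarrow> osc_on_cells_le \<sigma> s m \<epsilon>'"
  unfolding osc_on_cells_le_def by force

lemma Dspace_partition:
  fixes \<sigma> :: "real^'n::finite \<Rightarrow> 'a::metric_space"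
  assumes "\<sigma> \<in> Dspace" "\<forall>i. a$i < b$i" "0 < \<epsilon>"
  obtains s m where "is_partition a b s m" "osc_on_cells_le \<sigma> s m \<epsilon>"
proof -
  obtain s m where "\<forall>i. s i 0 = a$i \<and> s i (m i) = b$i \<and> (\<forall>j < m i. s i j < s i (Suc j))"
    and osc: "\<forall>k :: 'n \<Rightarrow> nat. (\<forall>i. k i < m i) \<longrightarrow>
            (\<forall>x y. (\<forall>i. s i (k i) \<le> x$i \<and> x$i < s i (Suc (k i)) \<and>
                        s i (k i) \<le> y$i \<and> y$i < s i (Suc (k i)))
                   \<longrightarrow> dist (\<sigma> x) (\<sigma> y) \<le> \<epsilon>)"
    using assms unfolding Dspace_def by blast
  moreover have "osc_on_cells_le \<sigma> s m \<epsilon>"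
    unfolding osc_on_cells_le_def same_cell_def
  proof (intro allI impI)
    fix x y assume "\<forall>i. \<exists>j<m i. s i j \<le> x$i \<and> x$i < s i (Suc j) \<and> s i j \<le> y$i \<and> y$i < s i (Suc j)"
    then obtain k where "\<forall>i. k i < m i \<and> s i (k i) \<le> x$i \<and> x$i < s i (Suc (k i)) \<and>
                        s i (k i) \<le> y$i \<and> y$i < s i (Suc (k i))"
      by metis
    then show "dist (\<sigma> x) (\<sigma> y) \<le> \<epsilon>" using osc by blast
  qed
  ultimately show ?thesis using that unfolding is_partition_def by blast
qed

lemma strict_mono_partition_cell:
  fixes s :: "nat \<Rightarrow> real"
  assumes "s 0 \<le> t" "t < s m" "\<forall>j<m. s j < s (Suc j)"
  shows "\<exists>j<m. s j \<le> t \<and> t < s (Suc j)"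
  using assms
proof (induction m)
  case (Suc m)
  show ?case
  proof (cases "t < s m")
    case True
    then show ?thesis using Suc by (metis less_SucI less_Suc_eq)
  next
    case False
    then show ?thesis using Suc by (intro exI[of _ m]) auto
  qed
qed simp

lemma partition_cell:
  assumes "is_partition a b s m" "a$i \<le> t" "t < b$i"
  shows "\<exists>j<m i. s i j \<le> t \<and> t < s i (Suc j)"
  using assms unfolding is_partition_def by (intro strict_mono_partition_cell) auto

lemma same_cell_refl:
  assumes "is_partition a b s m" "a$i \<le> x" "x < b$i"
  shows "same_cell s m i x x"
  using partition_cell[OF assms] unfolding same_cell_def by auto

lemma same_cell_near:
  assumes "is_partition a b s m" "a$i \<le> c - \<delta>" "c + \<delta> < b$i"
    and avoid: "\<forall>j\<le>m i. \<delta> < \<bar>s i j - c\<bar>"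
    and "\<bar>x - c\<bar> \<le> \<delta>" "\<bar>y - c\<bar> \<le> \<delta>"
  shows "same_cell s m i x y"
proof -
  have "c - \<delta> < b$i" using assms(3,5) by linarith
  then obtain j where j: "j < m i" "s i j \<le> c - \<delta>" "c - \<delta> < s i (Suc j)"
    using partition_cell[OF assms(1,2)] by blast
  then have "s i (Suc j) > c + \<delta>" using avoid[rule_format, of "Suc j"] by auto
  then show ?thesis unfolding same_cell_def using j assms(5,6) by (intro exI[of _ j]) auto
qed

lemma partition_points_avoid:
  fixes s :: "'n::finite \<Rightarrow> nat \<Rightarrow> real"
  assumes "\<forall>i j. s i j \<noteq> c"
  obtains \<delta> where "0 < \<delta>" "\<And>i j. j \<le> m i \<Longrightarrow> \<delta> < \<bar>s i j - c\<bar>"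
proof -
  have "finite (\<Union>i. s i ` {..m i})" by simp
  then obtain d where "0 < d" and d: "\<forall>p\<in>(\<Union>i. s i ` {..m i}). p \<noteq> c \<longrightarrow> d \<le> dist c p"
    using finite_set_avoid by blast
  have "d/2 < \<bar>s i j - c\<bar>" if "j \<le> m i" for i j
  proof -
    have "s i j \<in> (\<Union>i. s i ` {..m i})" using that by blast
    then have "d \<le> \<bar>s i j - c\<bar>" using d assms by (metis dist_commute dist_real_def)
    then show ?thesis using \<open>0 < d\<close> by linarith
  qed
  moreover have "0 < d/2" using \<open>0 < d\<close> by simp
  ultimately show ?thesis using that by blast
qed

lemma Dspace_right_continuous:
  fixes \<sigma> :: "real^'n::finite \<Rightarrow> 'a::metric_space"
  assumes "\<sigma> \<in> Dspace" "0 < \<epsilon>"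
  obtains \<delta> where "0 < \<delta>" "\<And>y. (\<forall>i. x$i \<le> y$i \<and> y$i < x$i + \<delta>) \<Longrightarrow> dist (\<sigma> y) (\<sigma> x) \<le> \<epsilon>"
proof -
  define a :: "real^'n" where "a = (\<chi> i. x$i - 1)"
  define b :: "real^'n" where "b = (\<chi> i. x$i + 1)"
  obtain s m where part: "is_partition a b s m" and osc: "osc_on_cells_le \<sigma> s m \<epsilon>"
    using Dspace_partition[OF assms(1) _ assms(2), of a b] by (auto simp: a_def b_def)
  have "\<forall>i. \<exists>j<m i. s i j \<le> x$i \<and> x$i < s i (Suc j)"
    using partition_cell[OF part] by (auto simp: a_def b_def)
  then obtain J where J: "\<forall>i. J i < m i \<and> s i (J i) \<le> x$i \<and> x$i < s i (Suc (J i))" by metis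
  define \<delta> where "\<delta> = Min (range (\<lambda>i. s i (Suc (J i)) - x$i))"
  have "0 < \<delta>" unfolding \<delta>_def using J by (subst Min_gr_iff) auto
  moreover have "\<delta> \<le> s i (Suc (J i)) - x$i" for i unfolding \<delta>_def by (rule Min_le) auto
  ultimately show ?thesis
    using that osc J unfolding osc_on_cells_le_def same_cell_def by (smt (verit))
qed

lemma Dspace_tendsto_from_above:
  fixes \<sigma> :: "real^'n::finite \<Rightarrow> 'a::metric_space"
  assumes "\<sigma> \<in> Dspace" "(y \<longlongrightarrow> x) F" "\<forall>\<^sub>F k in F. \<forall>i. x$i \<le> y k $ i"
  shows "((\<lambda>k. \<sigma> (y k)) \<longlongrightarrow> \<sigma> x) F"
proof (rule tendstoI)
  fix e :: real assume "0 < e"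
  then obtain \<delta> where "0 < \<delta>"
    and \<delta>: "\<And>y. (\<forall>i. x$i \<le> y$i \<and> y$i < x$i + \<delta>) \<Longrightarrow> dist (\<sigma> y) (\<sigma> x) \<le> e/2"
    using Dspace_right_continuous[OF assms(1), where \<epsilon>="e/2" and x=x] by auto
  from tendstoD[OF assms(2) \<open>0 < \<delta>\<close>] assms(3)
  show "\<forall>\<^sub>F k in F. dist (\<sigma> (y k)) (\<sigma> x) < e"
  proof eventually_elim
    case (elim k)
    have "dist (y k $ i) (x $ i) < \<delta>" for i
      using elim dist_vec_nth_le le_less_trans by blast
    then have "x$i \<le> y k $ i \<and> y k $ i < x$i + \<delta>" for i
      using elim(2) unfolding dist_real_def by (smt (verit))
    then have "dist (\<sigma> (y k)) (\<sigma> x) \<le> e/2" using \<delta> by blast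
    then show ?case using \<open>0 < e\<close> by linarith
  qed
qed

definition dyadic_above :: "nat \<Rightarrow> real^'n::finite \<Rightarrow> real^'n" where
  "dyadic_above k x = (\<chi> i. (of_int \<lfloor>2^k * x$i\<rfloor> + 1) / 2^k)"

lemma dyadic_above_bounds: "x$i < dyadic_above k x $ i \<and> dyadic_above k x $ i \<le> x$i + 1/2^k"
proof -
  have "of_int \<lfloor>2^k * x$i\<rfloor> \<le> 2^k * x$i" "2^k * x$i < of_int \<lfloor>2^k * x$i\<rfloor> + 1"
    by linarith+
  moreover have "(0::real) < 2^k" by simp
  ultimately show ?thesis by (simp add: dyadic_above_def field_simps)
qed

lemma dyadic_above_tendsto: "(\<lambda>k. dyadic_above k x) \<longlonglongrightarrow> x"
proof (rule vec_tendstoI)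
  fix i
  have "(\<lambda>k. x$i + 1/2^k) \<longlonglongrightarrow> x$i + 0"
    by (intro tendsto_intros LIMSEQ_divide_realpow_zero) auto
  then have upper: "(\<lambda>k. x$i + 1/2^k) \<longlonglongrightarrow> x$i" by simp
  show "(\<lambda>k. dyadic_above k x $ i) \<longlonglongrightarrow> x $ i"
    by (rule tendsto_sandwich[OF _ _ tendsto_const upper])
      (use dyadic_above_bounds[of x i] in \<open>auto intro!: always_eventually less_imp_le\<close>)
qed

lemma measurable_comp_dyadic_above:
  fixes \<sigma> :: "real^'n::finite \<Rightarrow> 'a::metric_space"
  shows  "(\<lambda>x. \<sigma> (dyadic_above k x)) \<in> borel_measurable borel"
proof -
  define h :: "real^'n \<Rightarrow> ('n \<Rightarrow> int)" where "h x = (\<lambda>i. \<lfloor>2^k * x$i\<rfloor>)" for x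
  have "h \<in> borel \<rightarrow>\<^sub>M count_space UNIV"
  proof (subst measurable_count_space_eq2_countable, safe)
    fix z :: "'n \<Rightarrow> int"
    have "h -` {z} \<inter> space borel = {x::real^'n. \<forall>i. \<lfloor>2^k * x$i\<rfloor> = z i}"
      by (auto simp: h_def)
    also have "\<dots> \<in> sets borel" by measurable
    finally show "h -` {z} \<inter> space borel \<in> sets borel" .
  qed auto
  then have "(\<lambda>x. \<sigma> (\<chi> i. (of_int (h x i) + 1) / 2^k)) \<in> borel_measurable borel"
    by (rule measurable_compose_countable'[where f="\<lambda>z x. \<sigma> (\<chi> i. (of_int (z i) + 1) / 2^k)", rotated])
      auto
  then show ?thesis by (simp add: h_def dyadic_above_def)
qed

lemma Dspace_borel_measurable:
  fixes \<sigma> :: "real^'n::finite \<Rightarrow> 'a::metric_space"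
  assumes "\<sigma> \<in> Dspace"
  shows "\<sigma> \<in> borel_measurable borel"
proof (rule borel_measurable_LIMSEQ_metric[OF measurable_comp_dyadic_above])
  fix x :: "real^'n"
  show "(\<lambda>k. \<sigma> (dyadic_above k x)) \<longlonglongrightarrow> \<sigma> x"
  proof (rule Dspace_tendsto_from_above[OF assms dyadic_above_tendsto always_eventually])
    show "\<forall>k i. x$i \<le> dyadic_above k x $ i"
      using dyadic_above_bounds less_imp_le by blast
  qed
qed

text \<open>At a regular level \<open>u\<close> no grid line of \<open>\<sigma>\<close> lies at \<open>\<plusminus>u\<close>, so truncation at \<open>u\<close> never
  moves a point across a jump of \<open>\<sigma>\<close>.\<close>

definition regular_level :: "(real^'n::finite \<Rightarrow> 'a::metric_space) \<Rightarrow> real \<Rightarrow> bool" where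
  "regular_level \<sigma> u \<longleftrightarrow> (\<forall>\<epsilon>>0. \<exists>a b s m. (\<forall>i. a$i < - u - 1 \<and> u + 1 < b$i) \<and>
     is_partition a b s m \<and> osc_on_cells_le \<sigma> s m \<epsilon> \<and> (\<forall>i j. s i j \<noteq> u \<and> s i j \<noteq> - u))"

lemma AE_regular_level:
  fixes \<sigma> :: "real^'n::finite \<Rightarrow> 'a::metric_space"
  assumes "\<sigma> \<in> Dspace"
  shows "AE u in lborel. regular_level \<sigma> u"
proof -
  define box :: "nat \<Rightarrow> real^'n" where "box N = (\<chi> i. real N + 1)" for N
  have "\<exists>s m. is_partition (- box N) (box N) s m \<and> osc_on_cells_le \<sigma> s m (inverse (Suc k))" for N k
  proof -
    have "\<forall>i. (- box N) $ i < box N $ i" "0 < inverse (real (Suc k))"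
      by (auto simp: box_def)
    then show ?thesis using Dspace_partition[OF assms] by metis
  qed
  then obtain S M where SM: "\<And>N k. is_partition (- box N) (box N) (S N k) (M N k) \<and>
      osc_on_cells_le \<sigma> (S N k) (M N k) (inverse (Suc k))"
    by metis
  define C where "C = range (\<lambda>(N, k, i, j). S N k i j) \<union> range (\<lambda>(N, k, i, j). - S N k i j)"
  have "AE u in lborel. u \<notin> C"
    by (intro AE_not_in countable_imp_null_set_lborel) (simp add: C_def)
  moreover have "regular_level \<sigma> u" if "u \<notin> C" for u
    unfolding regular_level_def
  proof (intro allI impI)
    fix \<epsilon> :: real assume "0 < \<epsilon>"
    then obtain k where k: "inverse (Suc k) < \<epsilon>" using reals_Archimedean by blast
    obtain N :: nat where N: "\<bar>u\<bar> < N" using reals_Archimedean2 by blast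
    have "S N k i j \<in> C" "- S N k i j \<in> C" for i j
      unfolding C_def by (auto intro!: image_eqI[where x="(N, k, i, j)"])
    then have "\<forall>i j. S N k i j \<noteq> u \<and> S N k i j \<noteq> - u"
      using \<open>u \<notin> C\<close> by (metis minus_minus)
    moreover have "\<forall>i. (- box N) $ i < - u - 1 \<and> u + 1 < box N $ i"
      using N by (auto simp: box_def)
    moreover have "osc_on_cells_le \<sigma> (S N k) (M N k) \<epsilon>"
      using SM k osc_on_cells_le_mono less_imp_le by blast
    ultimately show "\<exists>a b s m. (\<forall>i. a$i < - u - 1 \<and> u + 1 < b$i) \<and>
        is_partition a b s m \<and> osc_on_cells_le \<sigma> s m \<epsilon> \<and> (\<forall>i j. s i j \<noteq> u \<and> s i j \<noteq> - u)"
      using SM by blast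
  qed
  ultimately show ?thesis by (auto elim: AE_mp)
qed

lemma same_cell_clip_commute:
  fixes L :: "real \<Rightarrow> real"
  assumes part: "is_partition a b s m" "a$i < - u - \<delta>" "u + \<delta> < b$i"
    and avoid: "\<forall>j\<le>m i. \<delta> < \<bar>s i j - u\<bar> \<and> \<delta> < \<bar>s i j + u\<bar>"
    and "mono L" "0 < \<delta>" "\<delta> \<le> u"
    and close: "\<And>t. \<bar>t\<bar> \<le> u \<Longrightarrow> \<bar>L t - t\<bar> < \<delta>"
  shows "same_cell s m i (L (clip u t)) (clip u (L t))"
proof -
  have near_u: "same_cell s m i x y" if "\<bar>x - u\<bar> \<le> \<delta>" "\<bar>y - u\<bar> \<le> \<delta>" for x y
    using part avoid that \<open>\<delta> \<le> u\<close> by (intro same_cell_near[where c=u]) auto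
  have near_minus_u: "same_cell s m i x y" if "\<bar>x + u\<bar> \<le> \<delta>" "\<bar>y + u\<bar> \<le> \<delta>" for x y
    using part avoid that \<open>\<delta> \<le> u\<close> by (intro same_cell_near[where c="- u"]) auto
  consider "u < t" | "t < - u" | "\<bar>t\<bar> \<le> u" by linarith
  then show ?thesis
  proof cases
    case 1
    have "\<bar>L u - u\<bar> < \<delta>" "L u \<le> L t"
      using close[of u] \<open>0 < \<delta>\<close> \<open>\<delta> \<le> u\<close> 1 monoD[OF \<open>mono L\<close>] by auto
    then show ?thesis
      using 1 \<open>\<delta> \<le> u\<close> by (intro near_u) (auto simp: clip_def)
  next
    case 2
    have "\<bar>L (- u) + u\<bar> < \<delta>" "L t \<le> L (- u)"
      using close[of "- u"] \<open>0 < \<delta>\<close> \<open>\<delta> \<le> u\<close> 2 monoD[OF \<open>mono L\<close>] by auto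
    then show ?thesis
      using 2 \<open>\<delta> \<le> u\<close> by (intro near_minus_u) (auto simp: clip_def)
  next
    case 3
    then have t: "clip u t = t" "\<bar>L t - t\<bar> < \<delta>"
      using close by (auto simp: clip_eq_self)
    consider "\<bar>L t\<bar> \<le> u" | "u < L t" | "L t < - u" by linarith
    then show ?thesis
    proof cases
      case 1
      then have "a$i \<le> L t" "L t < b$i"
        using part(2,3) \<open>0 < \<delta>\<close> by linarith+
      then show ?thesis
        using t(1) clip_eq_self[OF 1] same_cell_refl[OF part(1)] by simp
    next
      case 2
      then show ?thesis using t 3 by (intro near_u) (auto simp: clip_def)
    next
      case 3
      then show ?thesis using t \<open>\<bar>t\<bar> \<le> u\<close> by (intro near_minus_u) (auto simp: clip_def)
    qed
  qed
qed

section \<open>The integrand \<open>u \<mapsto> d(\<rho>, \<sigma>, \<lambda>, u)\<close>\<close>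

lemma Lambda_continuous: "l \<in> Lambda \<Longrightarrow> continuous_on UNIV (l i)"
  unfolding Lambda_def using lipschitz_on_continuous_on by blast

lemma Lambda_mono: "l \<in> Lambda \<Longrightarrow> mono (l i)"
  unfolding Lambda_def using strict_mono_mono by blast

definition dlu_integral :: "(real^'n::finite \<Rightarrow> 'a::metric_space) \<Rightarrow> (real^'n \<Rightarrow> 'a) \<Rightarrow> ('n \<Rightarrow> real \<Rightarrow> real) \<Rightarrow> real" where
  "dlu_integral \<rho> \<sigma> l = (LINT u:{0<..}|lborel. exp (- u) * dlu \<rho> \<sigma> l u)"

lemma dS_eq_INF_dlu_integral: "dS \<rho> \<sigma> = (INF l\<in>Lambda. max (gamma l) (ereal (dlu_integral \<rho> \<sigma> l)))"
  by (simp add: dS_def dlu_integral_def)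

lemma dS_nonneg: "0 \<le> dS \<rho> \<sigma>"
  unfolding dS_def by (rule INF_greatest) (use gamma_nonneg in \<open>auto simp: le_max_iff_disj\<close>)

lemma dlu_least:
  "(\<And>x. dist (\<rho> (trunc u x)) (\<sigma> (trunc u (lam_app l x))) \<le> c) \<Longrightarrow> dlu \<rho> \<sigma> l u \<le> c"
  unfolding dlu_def by (rule cSUP_least) auto

lemma dlu_le_grid_oscillation:
  fixes \<rho> \<sigma> :: "real^'n::finite \<Rightarrow> 'a::metric_space"
  assumes part: "is_partition a b s m" and box: "\<And>i. a$i < - u - \<delta> \<and> u + \<delta> < b$i"
    and avoid: "\<And>i j. j \<le> m i \<Longrightarrow> \<delta> < \<bar>s i j - u\<bar> \<and> \<delta> < \<bar>s i j + u\<bar>"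
    and osc: "osc_on_cells_le \<sigma> s m \<eta>"
    and mono: "\<And>i. mono (l i)" and "0 < \<delta>" "\<delta> \<le> u"
    and close: "\<And>i t. \<bar>t\<bar> \<le> u \<Longrightarrow> \<bar>l i t - t\<bar> < \<delta>"
    and near: "\<And>x. x \<in> cbox (\<chi> i. - u) (\<chi> i. u) \<Longrightarrow> dist (\<rho> x) (\<sigma> (lam_app l x)) \<le> \<epsilon>"
  shows "dlu \<rho> \<sigma> l u \<le> \<epsilon> + \<eta>"
proof (rule dlu_least)
  fix x :: "real^'n"
  have "- u \<le> clip u t" "clip u t \<le> u" for t
    using clip_abs_le[of u t] \<open>0 < \<delta>\<close> \<open>\<delta> \<le> u\<close> by auto
  then have "dist (\<rho> (trunc u x)) (\<sigma> (lam_app l (trunc u x))) \<le> \<epsilon>"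
    by (intro near) (simp add: mem_box_cart)
  moreover have "same_cell s m i (l i (clip u (x $ i))) (clip u (l i (x $ i)))" for i
  proof (rule same_cell_clip_commute[OF part _ _ _ mono \<open>0 < \<delta>\<close> \<open>\<delta> \<le> u\<close> close])
    show "a$i < - u - \<delta>" "u + \<delta> < b$i" using box[of i] by auto
    show "\<forall>j\<le>m i. \<delta> < \<bar>s i j - u\<bar> \<and> \<delta> < \<bar>s i j + u\<bar>" using avoid by blast
  qed
  then have "dist (\<sigma> (lam_app l (trunc u x))) (\<sigma> (trunc u (lam_app l x))) \<le> \<eta>"
    using osc unfolding osc_on_cells_le_def by simp
  ultimately show "dist (\<rho> (trunc u x)) (\<sigma> (trunc u (lam_app l x))) \<le> \<epsilon> + \<eta>"
    using dist_triangle[of "\<rho> (trunc u x)" "\<sigma> (trunc u (lam_app l x))" "\<sigma> (lam_app l (trunc u x))"]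
    by linarith
qed

context
  assumes dist_le_1: "\<forall>p q :: 'a::{metric_space, second_countable_topology}. dist p q \<le> 1"
begin

lemma dlu_upper:
  fixes \<rho> \<sigma> :: "real^'n::finite \<Rightarrow> 'a"
  shows "dist (\<rho> (trunc u x)) (\<sigma> (trunc u (lam_app l x))) \<le> dlu \<rho> \<sigma> l u"
proof -
  have "bdd_above (range (\<lambda>x. dist (\<rho> (trunc u x)) (\<sigma> (trunc u (lam_app l x)))))"
    using dist_le_1 by (intro bdd_aboveI[of _ 1]) auto
  then show ?thesis unfolding dlu_def by (rule cSUP_upper[rotated]) simp
qed

lemma dlu_nonneg:
  fixes \<rho> \<sigma> :: "real^'n::finite \<Rightarrow> 'a"
  shows "0 \<le> dlu \<rho> \<sigma> l u"
  by (rule order_trans[OF zero_le_dist dlu_upper])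

lemma dlu_le_1:
  fixes \<rho> \<sigma> :: "real^'n::finite \<Rightarrow> 'a"
  shows "dlu \<rho> \<sigma> l u \<le> 1"
  using dist_le_1 by (intro dlu_least) auto

lemma abs_dlu_le_1:
  fixes \<rho> \<sigma> :: "real^'n::finite \<Rightarrow> 'a"
  shows "\<bar>dlu \<rho> \<sigma> l u\<bar> \<le> 1"
  using dlu_nonneg[of \<rho> \<sigma> l u] dlu_le_1[of \<rho> \<sigma> l u] by simp

lemma dlu_integral_nonneg:
  fixes \<rho> \<sigma> :: "real^'n::finite \<Rightarrow> 'a"
  shows "0 \<le> dlu_integral \<rho> \<sigma> l"
  unfolding dlu_integral_def by (intro exp_weighted_integral_nonneg dlu_nonneg)

text \<open>Every point is a limit from above of dyadic points, and elements of \<open>D\<close> are right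
  continuous.\<close>

lemma dlu_eq_SUP_rational:
  fixes \<rho> \<sigma> :: "real^'n::finite \<Rightarrow> 'a"
  assumes D: "\<rho> \<in> Dspace" "\<sigma> \<in> Dspace"
    and cont: "\<And>i. continuous_on UNIV (l i)" and mono: "\<And>i. mono (l i)"
  shows "dlu \<rho> \<sigma> l u =
    (SUP q\<in>range (\<lambda>z. \<chi> i. of_rat (z i)). dist (\<rho> (trunc u q)) (\<sigma> (trunc u (lam_app l q))))"
    (is "_ = (SUP q\<in>?Q. ?f q)")
proof (rule antisym)
  have bdd: "bdd_above (?f ` ?Q)"
    using dist_le_1 by (intro bdd_aboveI[of _ 1]) auto
  have dyadic: "dyadic_above k x \<in> ?Q" for k x
    by (rule image_eqI[where x="\<lambda>i. (of_int \<lfloor>2^k * x$i\<rfloor> + 1) / 2^k"])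
      (simp_all add: dyadic_above_def of_rat_divide of_rat_add of_rat_power)
  show "dlu \<rho> \<sigma> l u \<le> (SUP q\<in>?Q. ?f q)"
  proof (rule dlu_least)
    fix x :: "real^'n"
    have above: "x$i \<le> dyadic_above k x $ i" for k i
      using dyadic_above_bounds less_imp_le by blast
    have "(\<lambda>k. trunc u (dyadic_above k x)) \<longlonglongrightarrow> trunc u x"
      using tendsto_vec_nth[OF dyadic_above_tendsto[of x]]
      by (intro vec_tendstoI) (simp add: tendsto_clip)
    moreover have "\<forall>k i. trunc u x $ i \<le> trunc u (dyadic_above k x) $ i"
      by (simp add: clip_mono above)
    ultimately have lim1: "(\<lambda>k. \<rho> (trunc u (dyadic_above k x))) \<longlonglongrightarrow> \<rho> (trunc u x)"
      by (intro Dspace_tendsto_from_above[OF D(1)] always_eventually)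
    have "(\<lambda>k. l i (dyadic_above k x $ i)) \<longlonglongrightarrow> l i (x $ i)" for i
      using cont[of i] tendsto_vec_nth[OF dyadic_above_tendsto[of x], of i]
      by (metis UNIV_I continuous_on_def tendsto_compose tendsto_within_open open_UNIV)
    then have "(\<lambda>k. trunc u (lam_app l (dyadic_above k x))) \<longlonglongrightarrow> trunc u (lam_app l x)"
      by (intro vec_tendstoI) (simp add: tendsto_clip)
    moreover have "\<forall>k i. trunc u (lam_app l x) $ i \<le> trunc u (lam_app l (dyadic_above k x)) $ i"
      by (simp add: clip_mono above monoD[OF mono])
    ultimately have lim2: "(\<lambda>k. \<sigma> (trunc u (lam_app l (dyadic_above k x)))) \<longlonglongrightarrow> \<sigma> (trunc u (lam_app l x))"
      by (intro Dspace_tendsto_from_above[OF D(2)] always_eventually)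
    show "?f x \<le> (SUP q\<in>?Q. ?f q)"
      by (rule LIMSEQ_le_const2[OF tendsto_dist[OF lim1 lim2]])
        (auto intro!: cSUP_upper bdd dyadic)
  qed
  show "(SUP q\<in>?Q. ?f q) \<le> dlu \<rho> \<sigma> l u"
    by (intro cSUP_least) (auto simp: dlu_upper)
qed

lemma dlu_measurable:
  fixes \<rho> \<sigma> :: "real^'n::finite \<Rightarrow> 'a"
  assumes D: "\<rho> \<in> Dspace" "\<sigma> \<in> Dspace"
    and "\<And>i. continuous_on UNIV (l i)" "\<And>i. mono (l i)"
  shows "dlu \<rho> \<sigma> l \<in> borel_measurable borel"
proof -
  have [measurable]: "\<rho> \<in> borel_measurable borel" "\<sigma> \<in> borel_measurable borel"
    using D by (simp_all add: Dspace_borel_measurable)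
  have "(\<lambda>u. trunc u q) \<in> borel_measurable borel" for q :: "real^'n"
    unfolding trunc_def by (intro borel_measurable_continuous_onI continuous_intros)
  then have [measurable]: "(\<lambda>u. dist (\<rho> (trunc u q)) (\<sigma> (trunc u (lam_app l q)))) \<in> borel_measurable borel" for q
    by measurable
  have "(\<lambda>u. SUP q\<in>range (\<lambda>z::'n \<Rightarrow> rat. \<chi> i. of_rat (z i)). dist (\<rho> (trunc u q)) (\<sigma> (trunc u (lam_app l q))))
      \<in> borel_measurable borel"
    using dist_le_1 by (intro borel_measurable_cSUP bdd_aboveI[of _ 1]) auto
  then show ?thesis
    by (subst dlu_eq_SUP_rational[OF assms, abs_def])
qed

lemma integrable_dlu:
  fixes \<rho> \<sigma> :: "real^'n::finite \<Rightarrow> 'a"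
  assumes "\<rho> \<in> Dspace" "\<sigma> \<in> Dspace" "l \<in> Lambda"
  shows "integrable lborel (\<lambda>u. indicator {0<..} u *\<^sub>R (exp (- u) * dlu \<rho> \<sigma> l u))"
  using assms abs_dlu_le_1
  by (intro integrable_exp_weighted dlu_measurable Lambda_continuous Lambda_mono) auto

section \<open>Convergence in the Skorokhod metric\<close>

lemma time_changes_if_dS_tendsto_0:
  fixes \<sigma>s :: "nat \<Rightarrow> real^'n::finite \<Rightarrow> 'a" and \<sigma> :: "real^'n \<Rightarrow> 'a"
  assumes lim: "(\<lambda>n. dS (\<sigma>s n) \<sigma>) \<longlonglongrightarrow> 0"
  shows "\<exists>ls. (\<forall>n. ls n \<in> Lambda) \<and> (\<lambda>n. gamma (ls n)) \<longlonglongrightarrow> 0 \<and>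
    (\<lambda>n. dlu_integral (\<sigma>s n) \<sigma> (ls n)) \<longlonglongrightarrow> 0"
proof -
  define e where "e n = dS (\<sigma>s n) \<sigma> + ereal (inverse (Suc n))" for n
  have "(\<lambda>n. ereal (inverse (Suc n))) \<longlonglongrightarrow> ereal 0"
    by (subst lim_ereal) (rule LIMSEQ_inverse_real_of_nat)
  then have "e \<longlonglongrightarrow> 0 + ereal 0"
    unfolding e_def by (intro tendsto_add_ereal lim) auto
  then have e: "e \<longlonglongrightarrow> 0" by simp
  \<comment> \<open>Eventually \<open>dS\<close> is finite, hence strictly below \<open>e n\<close>.\<close>
  obtain N where N: "\<And>n. N \<le> n \<Longrightarrow> dS (\<sigma>s n) \<sigma> < 1"
    using order_tendstoD(2)[OF lim, of 1] by (auto simp: eventually_sequentially)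
  have "\<exists>l\<in>Lambda. max (gamma l) (ereal (dlu_integral (\<sigma>s n) \<sigma> l)) < e n" if "N \<le> n" for n
  proof -
    have "dS (\<sigma>s n) \<sigma> < e n"
      using N[OF that] dS_nonneg[of "\<sigma>s n" \<sigma>] unfolding e_def
      by (cases "dS (\<sigma>s n) \<sigma>") auto
    then show ?thesis unfolding dS_eq_INF_dlu_integral by (simp add: INF_less_iff)
  qed
  then obtain L where L: "\<And>n. N \<le> n \<Longrightarrow>
      L n \<in> Lambda \<and> max (gamma (L n)) (ereal (dlu_integral (\<sigma>s n) \<sigma> (L n))) < e n"
    by metis
  define ls where "ls n = L (max n N)" for n
  have ev: "\<forall>\<^sub>F n in sequentially. max (gamma (ls n)) (ereal (dlu_integral (\<sigma>s n) \<sigma> (ls n))) < e n"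
    unfolding eventually_sequentially ls_def using L by (intro exI[of _ N]) auto
  have "(\<lambda>n. gamma (ls n)) \<longlonglongrightarrow> 0"
    by (rule tendsto_sandwich[OF _ _ tendsto_const e])
      (use ev gamma_nonneg in \<open>auto elim!: eventually_mono\<close>)
  moreover have "(\<lambda>n. ereal (dlu_integral (\<sigma>s n) \<sigma> (ls n))) \<longlonglongrightarrow> 0"
    by (rule tendsto_sandwich[OF _ _ tendsto_const e])
      (use ev dlu_integral_nonneg in \<open>auto elim!: eventually_mono\<close>)
  then have "(\<lambda>n. dlu_integral (\<sigma>s n) \<sigma> (ls n)) \<longlonglongrightarrow> 0"
    by (simp add: zero_ereal_def lim_ereal)
  moreover have "\<forall>n. ls n \<in> Lambda" unfolding ls_def using L by simp
  ultimately show ?thesis by blast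
qed

lemma dS_tendsto_0_iff:
  fixes \<sigma>s :: "nat \<Rightarrow> real^'n::finite \<Rightarrow> 'a" and \<sigma> :: "real^'n \<Rightarrow> 'a"
  shows "(\<lambda>n. dS (\<sigma>s n) \<sigma>) \<longlonglongrightarrow> 0 \<longleftrightarrow>
    (\<exists>ls. (\<forall>n. ls n \<in> Lambda) \<and> (\<lambda>n. gamma (ls n)) \<longlonglongrightarrow> 0 \<and>
       (\<lambda>n. dlu_integral (\<sigma>s n) \<sigma> (ls n)) \<longlonglongrightarrow> 0)"
proof
  show "\<exists>ls. (\<forall>n. ls n \<in> Lambda) \<and> (\<lambda>n. gamma (ls n)) \<longlonglongrightarrow> 0 \<and>
      (\<lambda>n. dlu_integral (\<sigma>s n) \<sigma> (ls n)) \<longlonglongrightarrow> 0"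
    if "(\<lambda>n. dS (\<sigma>s n) \<sigma>) \<longlonglongrightarrow> 0"
    using that by (rule time_changes_if_dS_tendsto_0)
next
  assume "\<exists>ls. (\<forall>n. ls n \<in> Lambda) \<and> (\<lambda>n. gamma (ls n)) \<longlonglongrightarrow> 0 \<and>
      (\<lambda>n. dlu_integral (\<sigma>s n) \<sigma> (ls n)) \<longlonglongrightarrow> 0"
  then obtain ls where L: "\<forall>n. ls n \<in> Lambda" and g: "(\<lambda>n. gamma (ls n)) \<longlonglongrightarrow> 0"
    and I: "(\<lambda>n. dlu_integral (\<sigma>s n) \<sigma> (ls n)) \<longlonglongrightarrow> 0"
    by blast
  have "(\<lambda>n. max (gamma (ls n)) (ereal (dlu_integral (\<sigma>s n) \<sigma> (ls n)))) \<longlonglongrightarrow> max 0 (ereal 0)"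
    by (intro tendsto_max g) (simp add: lim_ereal I)
  then have upper: "(\<lambda>n. max (gamma (ls n)) (ereal (dlu_integral (\<sigma>s n) \<sigma> (ls n)))) \<longlonglongrightarrow> 0"
    by (simp add: zero_ereal_def)
  have "dS (\<sigma>s n) \<sigma> \<le> max (gamma (ls n)) (ereal (dlu_integral (\<sigma>s n) \<sigma> (ls n)))" for n
    unfolding dS_eq_INF_dlu_integral using L by (intro INF_lower) auto
  then show "(\<lambda>n. dS (\<sigma>s n) \<sigma>) \<longlonglongrightarrow> 0"
    by (intro tendsto_sandwich[OF _ _ tendsto_const upper]) (auto simp: dS_nonneg)
qed

lemma exists_level_with_small_dlu:
  fixes \<rho> \<sigma> :: "real^'n::finite \<Rightarrow> 'a"
  assumes "\<rho> \<in> Dspace" "\<sigma> \<in> Dspace" "l \<in> Lambda" "0 < a"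
    and small: "dlu_integral \<rho> \<sigma> l < exp (- (a+1)) * \<epsilon>"
  shows "\<exists>u\<in>{a..a+1}. dlu \<rho> \<sigma> l u < \<epsilon>"
proof (rule ccontr)
  assume "\<not> ?thesis"
  moreover have "0 < exp (- (a+1)) * \<epsilon>"
    using small dlu_integral_nonneg[of \<rho> \<sigma> l] by linarith
  then have "0 \<le> \<epsilon>" by (simp add: zero_less_mult_iff)
  ultimately have "exp (- (a+1)) * \<epsilon> \<le> dlu_integral \<rho> \<sigma> l"
    unfolding dlu_integral_def using assms dlu_nonneg dlu_le_1
    by (intro exp_weighted_integral_lower_bound dlu_measurable Lambda_continuous Lambda_mono)
      (auto simp: not_less)
  with small show False by simp
qed

lemma uniform_on_compact_if_dlu_integral_tendsto_0:
  fixes \<sigma>s :: "nat \<Rightarrow> real^'n::finite \<Rightarrow> 'a" and \<sigma> :: "real^'n \<Rightarrow> 'a"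
  assumes D: "\<forall>n. \<sigma>s n \<in> Dspace" "\<sigma> \<in> Dspace" and L: "\<forall>n. ls n \<in> Lambda"
    and g: "(\<lambda>n. gamma (ls n)) \<longlonglongrightarrow> 0" and I: "(\<lambda>n. dlu_integral (\<sigma>s n) \<sigma> (ls n)) \<longlonglongrightarrow> 0"
    and "compact K" "0 < \<epsilon>"
  shows "\<forall>\<^sub>F n in sequentially. \<forall>x\<in>K. dist (\<sigma>s n x) (\<sigma> (lam_app (ls n) x)) < \<epsilon>"
proof -
  obtain B where B: "\<forall>x\<in>K. norm x \<le> B"
    using compact_imp_bounded[OF \<open>compact K\<close>] bounded_iff by blast
  define U where "U = max B 1"
  have "0 < U" by (simp add: U_def)
  have K: "\<bar>x $ i\<bar> \<le> U" if "x \<in> K" for x i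
  proof -
    have "\<bar>x $ i\<bar> \<le> norm x" by (rule component_le_norm_cart)
    also have "\<dots> \<le> B" using B that by blast
    also have "\<dots> \<le> U" by (simp add: U_def)
    finally show ?thesis .
  qed
  have "\<forall>\<^sub>F n in sequentially. \<forall>i t. \<bar>t\<bar> + 1/2 \<le> U + 1 \<longrightarrow> \<bar>ls n i t - t\<bar> < 1/2"
    using \<open>0 < U\<close> by (intro eventually_close_to_id[OF g]) auto
  moreover have "\<forall>\<^sub>F n in sequentially. dlu_integral (\<sigma>s n) \<sigma> (ls n) < exp (- (U+2)) * \<epsilon>"
    using \<open>0 < \<epsilon>\<close> by (intro order_tendstoD(2)[OF I]) simp
  ultimately show ?thesis
  proof eventually_elim
    case (elim n)
    then obtain u where u: "U + 1 \<le> u" "dlu (\<sigma>s n) \<sigma> (ls n) u < \<epsilon>"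
      using exists_level_with_small_dlu[of "\<sigma>s n" \<sigma> "ls n" "U + 1" \<epsilon>] D L \<open>0 < U\<close>
      by (auto simp: add.assoc)
    show ?case
    proof
      fix x assume "x \<in> K"
      have "\<bar>ls n i (x $ i)\<bar> \<le> u" "\<bar>x $ i\<bar> \<le> u" for i
        using elim(1)[rule_format, of "x $ i" i] K[OF \<open>x \<in> K\<close>, of i] u(1) by linarith+
      then have "trunc u x = x" "trunc u (lam_app (ls n) x) = lam_app (ls n) x"
        by (simp_all add: trunc_eq_self)
      then show "dist (\<sigma>s n x) (\<sigma> (lam_app (ls n) x)) < \<epsilon>"
        using dlu_upper[of "\<sigma>s n" u x \<sigma> "ls n"] u(2) by simp
    qed
  qed
qed

lemma dlu_tendsto_0_at_regular_level:
  fixes \<sigma>s :: "nat \<Rightarrow> real^'n::finite \<Rightarrow> 'a" and \<sigma> :: "real^'n \<Rightarrow> 'a"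
  assumes reg: "regular_level \<sigma> u" and "0 < u"
    and mono: "\<And>n i. mono (ls n i)" and g: "(\<lambda>n. gamma (ls n)) \<longlonglongrightarrow> 0"
    and unif: "\<And>K \<epsilon>. compact K \<Longrightarrow> 0 < \<epsilon> \<Longrightarrow>
      \<forall>\<^sub>F n in sequentially. \<forall>x\<in>K. dist (\<sigma>s n x) (\<sigma> (lam_app (ls n) x)) < \<epsilon>"
  shows "(\<lambda>n. dlu (\<sigma>s n) \<sigma> (ls n) u) \<longlonglongrightarrow> 0"
proof (rule tendstoI)
  fix e :: real assume "0 < e"
  then have "0 < e/4" by simp
  then obtain a b s m where box: "\<forall>i. a$i < - u - 1 \<and> u + 1 < b$i" and part: "is_partition a b s m"
    and osc: "osc_on_cells_le \<sigma> s m (e/4)" and off_u: "\<forall>i j. s i j \<noteq> u \<and> s i j \<noteq> - u"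
    using reg unfolding regular_level_def by blast
  obtain d1 where "0 < d1" and d1: "\<And>i j. j \<le> m i \<Longrightarrow> d1 < \<bar>s i j - u\<bar>"
    using partition_points_avoid[of s u] off_u by blast
  obtain d2 where "0 < d2" and d2: "\<And>i j. j \<le> m i \<Longrightarrow> d2 < \<bar>s i j - - u\<bar>"
    using partition_points_avoid[of s "- u"] off_u by blast
  define \<delta> where "\<delta> = min (min d1 d2) (min (1/2) u)"
  have \<delta>: "0 < \<delta>" "\<delta> \<le> 1/2" "\<delta> \<le> u"
    using \<open>0 < d1\<close> \<open>0 < d2\<close> \<open>0 < u\<close> by (auto simp: \<delta>_def)
  have "\<forall>\<^sub>F n in sequentially. \<forall>i t. \<bar>t\<bar> + \<delta> \<le> u + 1 \<longrightarrow> \<bar>ls n i t - t\<bar> < \<delta>"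
    using \<open>0 < u\<close> \<delta> by (intro eventually_close_to_id[OF g]) auto
  moreover have "\<forall>\<^sub>F n in sequentially.
      \<forall>x\<in>cbox (\<chi> i. - u) (\<chi> i. u). dist (\<sigma>s n x) (\<sigma> (lam_app (ls n) x)) < e/2"
    using \<open>0 < e\<close> by (intro unif) simp_all
  ultimately show "\<forall>\<^sub>F n in sequentially. dist (dlu (\<sigma>s n) \<sigma> (ls n) u) 0 < e"
  proof eventually_elim
    case (elim n)
    have "dlu (\<sigma>s n) \<sigma> (ls n) u \<le> e/2 + e/4"
    proof (rule dlu_le_grid_oscillation[OF part _ _ osc mono \<delta>(1,3)])
      show "a$i < - u - \<delta> \<and> u + \<delta> < b$i" for i
        using box[rule_format, of i] \<delta>(2) by auto
      show "\<delta> < \<bar>s i j - u\<bar> \<and> \<delta> < \<bar>s i j + u\<bar>" if "j \<le> m i" for i j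
        using d1[OF that] d2[OF that] unfolding \<delta>_def by linarith
      show "\<bar>ls n i t - t\<bar> < \<delta>" if "\<bar>t\<bar> \<le> u" for i t
        using elim(1) that \<delta> by force
    qed (use elim(2) in force)
    then show ?case using \<open>0 < e\<close> dlu_nonneg[of "\<sigma>s n" \<sigma> "ls n" u] by simp
  qed
qed

lemma dlu_integral_tendsto_0_if_uniform_on_compact:
  fixes \<sigma>s :: "nat \<Rightarrow> real^'n::finite \<Rightarrow> 'a" and \<sigma> :: "real^'n \<Rightarrow> 'a"
  assumes D: "\<forall>n. \<sigma>s n \<in> Dspace" "\<sigma> \<in> Dspace" and L: "\<forall>n. ls n \<in> Lambda"
    and g: "(\<lambda>n. gamma (ls n)) \<longlonglongrightarrow> 0"
    and unif: "\<And>K \<epsilon>. compact K \<Longrightarrow> 0 < \<epsilon> \<Longrightarrow>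
      \<forall>\<^sub>F n in sequentially. \<forall>x\<in>K. dist (\<sigma>s n x) (\<sigma> (lam_app (ls n) x)) < \<epsilon>"
  shows "(\<lambda>n. dlu_integral (\<sigma>s n) \<sigma> (ls n)) \<longlonglongrightarrow> 0"
proof -
  define f where "f n u = indicator {0<..} u *\<^sub>R (exp (- u) * dlu (\<sigma>s n) \<sigma> (ls n) u)" for n u
  have "integrable lborel (f n)" for n
    unfolding f_def using D L by (intro integrable_dlu) auto
  moreover have "AE u in lborel. (\<lambda>n. f n u) \<longlonglongrightarrow> 0"
    using AE_regular_level[OF D(2)]
  proof eventually_elim
    case (elim u)
    show ?case
    proof (cases "0 < u")
      case True
      then have "(\<lambda>n. dlu (\<sigma>s n) \<sigma> (ls n) u) \<longlonglongrightarrow> 0"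
        using elim L Lambda_mono g unif by (intro dlu_tendsto_0_at_regular_level) auto
      then show ?thesis
        using True by (simp add: f_def tendsto_mult_right_zero)
    qed (simp add: f_def)
  qed
  moreover have "AE u in lborel. norm (f n u) \<le> indicator {0<..} u * exp (- u)" for n
    using abs_dlu_le_1
    by (intro AE_I2) (auto simp: f_def indicator_def abs_mult intro!: mult_left_le)
  ultimately have "(\<lambda>n. integral\<^sup>L lborel (f n)) \<longlonglongrightarrow> integral\<^sup>L lborel (\<lambda>u::real. 0::real)"
    by (intro integral_dominated_convergence[OF _ borel_measurable_integrable integrable_exp_minus]) auto
  moreover have "dlu_integral (\<sigma>s n) \<sigma> (ls n) = integral\<^sup>L lborel (f n)" for n
    by (simp add: dlu_integral_def set_lebesgue_integral_def f_def[abs_def])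
  ultimately show ?thesis by simp
qed

end

theorem lemma10p1:
  fixes \<sigma>s :: "nat \<Rightarrow> real^'n::finite \<Rightarrow> 'a::polish_space"
    and \<sigma> :: "real^'n \<Rightarrow> 'a"
  assumes r_le_1: "\<forall>p q :: 'a. dist p q \<le> 1"
    and "\<forall>n. \<sigma>s n \<in> Dspace" and "\<sigma> \<in> Dspace"
  shows "((\<lambda>n. dS (\<sigma>s n) \<sigma>) \<longlongrightarrow> 0) sequentially \<longleftrightarrow>
    (\<exists>ls :: nat \<Rightarrow> 'n \<Rightarrow> real \<Rightarrow> real.
       (\<forall>n. ls n \<in> Lambda) \<and>
       ((\<lambda>n. gamma (ls n)) \<longlongrightarrow> 0) sequentially \<and>
       (\<forall>K. compact K \<longrightarrow>
          (\<forall>\<epsilon>>0. \<forall>\<^sub>F n in sequentially.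
             \<forall>x\<in>K. dist (\<sigma>s n x) (\<sigma> (lam_app (ls n) x)) < \<epsilon>)))"
proof -
  have "(\<lambda>n. dlu_integral (\<sigma>s n) \<sigma> (ls n)) \<longlonglongrightarrow> 0 \<longleftrightarrow>
      (\<forall>K. compact K \<longrightarrow> (\<forall>\<epsilon>>0. \<forall>\<^sub>F n in sequentially.
        \<forall>x\<in>K. dist (\<sigma>s n x) (\<sigma> (lam_app (ls n) x)) < \<epsilon>))"
    if "\<forall>n. ls n \<in> Lambda" "(\<lambda>n. gamma (ls n)) \<longlonglongrightarrow> 0" for ls
    using uniform_on_compact_if_dlu_integral_tendsto_0[OF r_le_1 assms(2,3) that]
      dlu_integral_tendsto_0_if_uniform_on_compact[OF r_le_1 assms(2,3) that]
    by blast
  then show ?thesis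
    unfolding dS_tendsto_0_iff[OF r_le_1] by blast
qed

end
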